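(* Let $\kappa\in\mathbb{K}$, let $(\mathfrak{g},[-,-]_\mathfrak{g},\alpha_\mathfrak{g})$ and $(\mathfrak{h},[-,-]_\mathfrak{h},\alpha_\mathfrak{h})$ be Hom-Lie algebras, $\rho$ an action of $\mathfrak{g}$ on $\mathfrak{h}$, and $\mathcal{A}:\mathfrak{h}\to\mathfrak{g}$ a $\kappa$-weighted $\mathcal{O}$-operator with respect to $\rho$. Then: (i) $(\mathfrak{h},[-,-],\star,\alpha_\mathfrak{h})$ is a Hom-post-Lie algebra, where $[u,v]=\kappa[u,v]_\mathfrak{h}$ and $u\star v=\rho(\mathcal{A}u)v$; (ii) $(\mathfrak{h},[-,-]_\mathcal{A},\alpha_\mathfrak{h})$ is a Hom-Lie algebra, where $[u,v]_\mathcal{A}=\rho(\mathcal{A}u)v-\rho(\mathcal{A}v)u+\kappa[u,v]_\mathfrak{h}$, and $\mathcal{A}$ is a Hom-Lie algebra homomorphism from $(\mathfrak{h},[-,-]_\mathcal{A},\alpha_\mathfrak{h})$ to $(\mathfrak{g},[-,-]_\mathfrak{g},\alpha_\mathfrak{g})$; (iii) the map $\mathrm{ad}:\mathfrak{h}\to\mathrm{End}(\mathfrak{h})$, $\mathrm{ad}(u)v=u\star v=\rho(\mathcal{A}u)v$, is an action of the Hom-Lie algebra $(\mathfrak{h},[-,-]_\mathcal{A},\alpha_\mathfrak{h})$ on the Hom-Lie algebra $(\mathfrak{h},[-,-]_\mathfrak{h},\alpha_\mathfrak{h})$.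
   Context: All vector spaces are over a field $\mathbb{K}$ of characteristic zero. A Hom-Lie algebra $(\mathfrak{g},[-,-]_\mathfrak{g},\alpha_\mathfrak{g})$ is a vector space with a skew-symmetric bilinear bracket and a linear map $\alpha_\mathfrak{g}$ with $\alpha_\mathfrak{g}([x,y]_\mathfrak{g})=[\alpha_\mathfrak{g}(x),\alpha_\mathfrak{g}(y)]_\mathfrak{g}$ satisfying $[\alpha_\mathfrak{g}(x),[y,z]_\mathfrak{g}]_\mathfrak{g}+[\alpha_\mathfrak{g}(y),[z,x]_\mathfrak{g}]_\mathfrak{g}+[\alpha_\mathfrak{g}(z),[x,y]_\mathfrak{g}]_\mathfrak{g}=0$. A homomorphism $\varphi$ of Hom-Lie algebras satisfies $\varphi\circ\alpha_1=\alpha_2\circ\varphi$ and $\varphi([x,y]_1)=[\varphi x,\varphi y]_2$. A representation of a Hom-Lie algebra $\mathfrak{g}$ on $(\mathfrak{h},\alpha_\mathfrak{h})$ ($\mathfrak{h}$ a vector space, $\alpha_\mathfrak{h}$ linear) is a linear map $\rho:\mathfrak{g}\to\mathrm{End}(\mathfrak{h})$ with $\rho(\alpha_\mathfrak{g}(x))\circ\alpha_\mathfrak{h}=\alpha_\mathfrak{h}\circ\rho(x)$ and $\rho([x,y]_\mathfrak{g})\circ\alpha_\mathfrak{h}=\rho(\alpha_\mathfrak{g}(x))\circ\rho(y)-\rho(\alpha_\mathfrak{g}(y))\circ\rho(x)$. An action of $\mathfrak{g}$ on a Hom-Lie algebra $(\mathfrak{h},[-,-]_\mathfrak{h},\alpha_\mathfrak{h})$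 is a representation $\rho$ on $(\mathfrak{h},\alpha_\mathfrak{h})$ such that for all $x\in\mathfrak{g}$, $u,v\in\mathfrak{h}$: $\rho(\alpha_\mathfrak{g}(x))[u,v]_\mathfrak{h}=[\rho(x)u,\alpha_\mathfrak{h}(v)]_\mathfrak{h}+[\alpha_\mathfrak{h}(u),\rho(x)v]_\mathfrak{h}$ and $[\rho(x)u,\alpha_\mathfrak{h}(v)]_\mathfrak{h}=0$. A $\kappa$-weighted $\mathcal{O}$-operator from $\mathfrak{h}$ to $\mathfrak{g}$ with respect to an action $\rho$ is a linear map $\mathcal{A}:\mathfrak{h}\to\mathfrak{g}$ with $\mathcal{A}\circ\alpha_\mathfrak{h}=\alpha_\mathfrak{g}\circ\mathcal{A}$ and $[\mathcal{A}u,\mathcal{A}v]_\mathfrak{g}=\mathcal{A}(\rho(\mathcal{A}u)v-\rho(\mathcal{A}v)u+\kappa[u,v]_\mathfrak{h})$ for all $u,v\in\mathfrak{h}$. A Hom-post-Lie algebra $(\mathfrak{h},[-,-],\star,\alpha_\mathfrak{h})$ is a Hom-Lie algebra $(\mathfrak{h},[-,-],\alpha_\mathfrak{h})$ with a bilinear map $\star$ such that $\alpha_\mathfrak{h}(u\star v)=\alpha_\mathfrak{h}(u)\star\alpha_\mathfrak{h}(v)$ and for all $u,v,w$: $\alpha_\mathfrak{h}(u)\star[v,w]=[u\star v,\alpha_\mathfrak{h}(w)]+[\alpha_\mathfrak{h}(v),u\star w]$; $([u,v]+u\star v-v\star u)\star\alpha_\mathfrak{h}(w)=\alpha_\mathfrak{h}(u)\star(v\star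 w)-\alpha_\mathfrak{h}(v)\star(u\star w)$; $\alpha_\mathfrak{h}(u)\star[v,w]=[u\star v,\alpha_\mathfrak{h}(w)]=0$. *)

theory Defs
  imports Complex_Main
begin

definition bilinear_map ::
  "('k::field \<Rightarrow> 'a::ab_group_add \<Rightarrow> 'a) \<Rightarrow> ('k \<Rightarrow> 'b::ab_group_add \<Rightarrow> 'b) \<Rightarrow>
   ('k \<Rightarrow> 'c::ab_group_add \<Rightarrow> 'c) \<Rightarrow> ('a \<Rightarrow> 'b \<Rightarrow> 'c) \<Rightarrow> bool" where
  "bilinear_map s1 s2 s3 f \<longleftrightarrow>
     (\<forall>y. Vector_Spaces.linear s1 s3 (\<lambda>x. f x y)) \<and>
     (\<forall>x. Vector_Spaces.linear s2 s3 (\<lambda>y. f x y))"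

definition hom_lie_algebra ::
  "('k::field \<Rightarrow> 'g::ab_group_add \<Rightarrow> 'g) \<Rightarrow> ('g \<Rightarrow> 'g \<Rightarrow> 'g) \<Rightarrow> ('g \<Rightarrow> 'g) \<Rightarrow> bool" where
  "hom_lie_algebra sc br al \<longleftrightarrow>
     vector_space sc \<and>
     bilinear_map sc sc sc br \<and>
     Vector_Spaces.linear sc sc al \<and>
     (\<forall>x y. br x y = - br y x) \<and>
     (\<forall>x y. al (br x y) = br (al x) (al y)) \<and>
     (\<forall>x y z. br (al x) (br y z) + br (al y) (br z x) + br (al z) (br x y) = 0)"

definition hom_lie_hom ::
  "('k::field \<Rightarrow> 'g::ab_group_add \<Rightarrow> 'g) \<Rightarrow> ('g \<Rightarrow> 'g \<Rightarrow> 'g) \<Rightarrow> ('g \<Rightarrow> 'g) \<Rightarrow>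
   ('k \<Rightarrow> 'h::ab_group_add \<Rightarrow> 'h) \<Rightarrow> ('h \<Rightarrow> 'h \<Rightarrow> 'h) \<Rightarrow> ('h \<Rightarrow> 'h) \<Rightarrow>
   ('g \<Rightarrow> 'h) \<Rightarrow> bool" where
  "hom_lie_hom s1 br1 al1 s2 br2 al2 \<phi> \<longleftrightarrow>
     Vector_Spaces.linear s1 s2 \<phi> \<and>
     (\<forall>x. \<phi> (al1 x) = al2 (\<phi> x)) \<and>
     (\<forall>x y. \<phi> (br1 x y) = br2 (\<phi> x) (\<phi> y))"

definition hom_lie_rep ::
  "('k::field \<Rightarrow> 'g::ab_group_add \<Rightarrow> 'g) \<Rightarrow> ('g \<Rightarrow> 'g \<Rightarrow> 'g) \<Rightarrow> ('g \<Rightarrow> 'g) \<Rightarrow>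
   ('k \<Rightarrow> 'h::ab_group_add \<Rightarrow> 'h) \<Rightarrow> ('h \<Rightarrow> 'h) \<Rightarrow> ('g \<Rightarrow> 'h \<Rightarrow> 'h) \<Rightarrow> bool" where
  "hom_lie_rep sg brg alg sh alh \<rho> \<longleftrightarrow>
     vector_space sh \<and>
     Vector_Spaces.linear sh sh alh \<and>
     (\<forall>x. Vector_Spaces.linear sh sh (\<rho> x)) \<and>
     (\<forall>v. Vector_Spaces.linear sg sh (\<lambda>x. \<rho> x v)) \<and>
     (\<forall>x v. \<rho> (alg x) (alh v) = alh (\<rho> x v)) \<and>
     (\<forall>x y v. \<rho> (brg x y) (alh v) = \<rho> (alg x) (\<rho> y v) - \<rho> (alg y) (\<rho> x v))"

definition hom_lie_action ::
  "('k::field \<Rightarrow> 'g::ab_group_add \<Rightarrow> 'g) \<Rightarrow> ('g \<Rightarrow> 'g \<Rightarrow> 'g) \<Rightarrow> ('g \<Rightarrow> 'g) \<Rightarrow>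
   ('k \<Rightarrow> 'h::ab_group_add \<Rightarrow> 'h) \<Rightarrow> ('h \<Rightarrow> 'h \<Rightarrow> 'h) \<Rightarrow> ('h \<Rightarrow> 'h) \<Rightarrow>
   ('g \<Rightarrow> 'h \<Rightarrow> 'h) \<Rightarrow> bool" where
  "hom_lie_action sg brg alg sh brh alh \<rho> \<longleftrightarrow>
     hom_lie_rep sg brg alg sh alh \<rho> \<and>
     (\<forall>x u v. \<rho> (alg x) (brh u v) = brh (\<rho> x u) (alh v) + brh (alh u) (\<rho> x v)) \<and>
     (\<forall>x u v. brh (\<rho> x u) (alh v) = 0)"

definition weighted_O_operator ::
  "'k \<Rightarrow> ('k::field \<Rightarrow> 'g::ab_group_add \<Rightarrow> 'g) \<Rightarrow> ('g \<Rightarrow> 'g \<Rightarrow> 'g) \<Rightarrow> ('g \<Rightarrow> 'g) \<Rightarrow>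
   ('k \<Rightarrow> 'h::ab_group_add \<Rightarrow> 'h) \<Rightarrow> ('h \<Rightarrow> 'h \<Rightarrow> 'h) \<Rightarrow> ('h \<Rightarrow> 'h) \<Rightarrow>
   ('g \<Rightarrow> 'h \<Rightarrow> 'h) \<Rightarrow> ('h \<Rightarrow> 'g) \<Rightarrow> bool" where
  "weighted_O_operator \<kappa> sg brg alg sh brh alh \<rho> A \<longleftrightarrow>
     Vector_Spaces.linear sh sg A \<and>
     (\<forall>u. A (alh u) = alg (A u)) \<and>
     (\<forall>u v. brg (A u) (A v) = A (\<rho> (A u) v - \<rho> (A v) u + sh \<kappa> (brh u v)))"

definition hom_post_lie_algebra ::
  "('k::field \<Rightarrow> 'h::ab_group_add \<Rightarrow> 'h) \<Rightarrow> ('h \<Rightarrow> 'h \<Rightarrow> 'h) \<Rightarrow> ('h \<Rightarrow> 'h \<Rightarrow> 'h) \<Rightarrow>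
   ('h \<Rightarrow> 'h) \<Rightarrow> bool" where
  "hom_post_lie_algebra sh br st al \<longleftrightarrow>
     hom_lie_algebra sh br al \<and>
     bilinear_map sh sh sh st \<and>
     (\<forall>u v. al (st u v) = st (al u) (al v)) \<and>
     (\<forall>u v w. st (al u) (br v w) = br (st u v) (al w) + br (al v) (st u w)) \<and>
     (\<forall>u v w. st (br u v + st u v - st v u) (al w) = st (al u) (st v w) - st (al v) (st u w)) \<and>
     (\<forall>u v w. st (al u) (br v w) = br (st u v) (al w) \<and> br (st u v) (al w) = 0)"

end

(* An action annihilates brackets of h: rho(alg x) [u,v] = 0 and [rho x u, alh v] = 0. Hence
   both derivation axioms for u * v = rho (A u) v hold with both sides zero, and the remaining
   post-Lie axiom is the representation identity applied to [A u, A v] = A [u,v]_A.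
   Any Hom-post-Lie algebra has the subadjacent Hom-Lie bracket u * v - v * u + [u,v], which is
   [-,-]_A; the O-operator identity makes A a homomorphism for it, and pulling rho back along
   this homomorphism gives the action of (iii). *)

theory Submission
  imports Defs
begin

lemmas linear_map_add = module_hom.add[OF module_hom_linearI]
lemmas linear_map_diff = module_hom.diff[OF module_hom_linearI]
lemmas linear_map_neg = module_hom.neg[OF module_hom_linearI]
lemmas linear_map_zero = module_hom.zero[OF module_hom_linearI]
lemmas linear_map_scale = module_hom.scale[OF module_hom_linearI]

lemma
  assumes "bilinear_map s1 s2 s3 f"
  shows bilinear_map_linear_left: "Vector_Spaces.linear s1 s3 (\<lambda>x. f x y)"
    and bilinear_map_linear_right: "Vector_Spaces.linear s2 s3 (\<lambda>y. f x y)"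
  using assms unfolding bilinear_map_def by blast+

lemma bilinear_map_simps:
  assumes "bilinear_map s1 s2 s3 f"
  shows "f (x + x') y = f x y + f x' y" "f x (y + y') = f x y + f x y'"
    and "f (x - x') y = f x y - f x' y" "f x (y - y') = f x y - f x y'"
    and "f (- x) y = - f x y" "f x (- y) = - f x y"
    and "f 0 y = 0" "f x 0 = 0"
    and "f (s1 c x) y = s3 c (f x y)" "f x (s2 c y) = s3 c (f x y)"
  by (simp_all only:
      linear_map_add[OF bilinear_map_linear_left[OF assms]]
      linear_map_add[OF bilinear_map_linear_right[OF assms]]
      linear_map_diff[OF bilinear_map_linear_left[OF assms]]
      linear_map_diff[OF bilinear_map_linear_right[OF assms]]
      linear_map_neg[OF bilinear_map_linear_left[OF assms]]
      linear_map_neg[OF bilinear_map_linear_right[OF assms]]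
      linear_map_zero[OF bilinear_map_linear_left[OF assms]]
      linear_map_zero[OF bilinear_map_linear_right[OF assms]]
      linear_map_scale[OF bilinear_map_linear_left[OF assms]]
      linear_map_scale[OF bilinear_map_linear_right[OF assms]])

lemma
  assumes "hom_lie_algebra sc br al"
  shows hom_lie_algebra_vector_space: "vector_space sc"
    and hom_lie_algebra_bilinear: "bilinear_map sc sc sc br"
    and hom_lie_algebra_linear_twist: "Vector_Spaces.linear sc sc al"
    and hom_lie_algebra_skew: "br x y = - br y x"
    and hom_lie_algebra_twist_bracket: "al (br x y) = br (al x) (al y)"
    and hom_lie_algebra_jacobi: "br (al x) (br y z) + br (al y) (br z x) + br (al z) (br x y) = 0"
  using assms unfolding hom_lie_algebra_def by blast+

lemma hom_lie_algebraI:
  assumes "vector_space sc" "bilinear_map sc sc sc br" "Vector_Spaces.linear sc sc al"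
    and "\<And>x y. br x y = - br y x"
    and "\<And>x y. al (br x y) = br (al x) (al y)"
    and "\<And>x y z. br (al x) (br y z) + br (al y) (br z x) + br (al z) (br x y) = 0"
  shows "hom_lie_algebra sc br al"
  using assms unfolding hom_lie_algebra_def by blast

lemma
  assumes "hom_lie_rep sg brg alg sh alh \<rho>"
  shows hom_lie_rep_bilinear: "bilinear_map sg sh sh \<rho>"
    and hom_lie_rep_twist: "\<rho> (alg x) (alh v) = alh (\<rho> x v)"
    and hom_lie_rep_bracket: "\<rho> (brg x y) (alh v) = \<rho> (alg x) (\<rho> y v) - \<rho> (alg y) (\<rho> x v)"
  using assms unfolding hom_lie_rep_def bilinear_map_def by blast+

lemma
  assumes "hom_lie_action sg brg alg sh brh alh \<rho>"
  shows hom_lie_action_rep: "hom_lie_rep sg brg alg sh alh \<rho>"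
    and hom_lie_action_derivation:
      "\<rho> (alg x) (brh u v) = brh (\<rho> x u) (alh v) + brh (alh u) (\<rho> x v)"
    and hom_lie_action_bracket_left: "brh (\<rho> x u) (alh v) = 0"
  using assms unfolding hom_lie_action_def by blast+

lemma hom_lie_action_bracket_right:
  assumes "hom_lie_algebra sh brh alh" "hom_lie_action sg brg alg sh brh alh \<rho>"
  shows "brh (alh u) (\<rho> x v) = 0"
proof -
  have "brh (alh u) (\<rho> x v) = - brh (\<rho> x v) (alh u)"
    by (rule hom_lie_algebra_skew[OF assms(1)])
  then show ?thesis by (simp add: hom_lie_action_bracket_left[OF assms(2)])
qed

lemma hom_lie_action_on_bracket:
  assumes "hom_lie_algebra sh brh alh" "hom_lie_action sg brg alg sh brh alh \<rho>"
  shows "\<rho> (alg x) (brh u v) = 0"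
  by (simp add: hom_lie_action_derivation[OF assms(2)] hom_lie_action_bracket_left[OF assms(2)]
      hom_lie_action_bracket_right[OF assms])

lemma
  assumes "weighted_O_operator \<kappa> sg brg alg sh brh alh \<rho> A"
  shows weighted_O_operator_linear: "Vector_Spaces.linear sh sg A"
    and weighted_O_operator_twist: "A (alh u) = alg (A u)"
    and weighted_O_operator_bracket:
      "brg (A u) (A v) = A (\<rho> (A u) v - \<rho> (A v) u + sh \<kappa> (brh u v))"
  using assms unfolding weighted_O_operator_def by blast+

lemma
  assumes "hom_post_lie_algebra sc br st al"
  shows hom_post_lie_hom_lie: "hom_lie_algebra sc br al"
    and hom_post_lie_bilinear: "bilinear_map sc sc sc st"
    and hom_post_lie_twist: "al (st u v) = st (al u) (al v)"
    and hom_post_lie_derivation: "st (al u) (br v w) = br (st u v) (al w) + br (al v) (st u w)"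
    and hom_post_lie_assoc:
      "st (br u v + st u v - st v u) (al w) = st (al u) (st v w) - st (al v) (st u w)"
  using assms unfolding hom_post_lie_algebra_def by blast+

lemma hom_lie_algebra_scale:
  assumes "hom_lie_algebra sc br al"
  shows "hom_lie_algebra sc (\<lambda>u v. sc k (br u v)) al"
proof -
  interpret vector_space sc by (rule hom_lie_algebra_vector_space[OF assms])
  note br_simps = bilinear_map_simps[OF hom_lie_algebra_bilinear[OF assms]]
  have jacobi: "sc k (br (al x) (sc k (br y z))) + sc k (br (al y) (sc k (br z x)))
      + sc k (br (al z) (sc k (br x y))) = 0" for x y z
  proof -
    have "sc k (br (al x) (sc k (br y z))) + sc k (br (al y) (sc k (br z x)))
        + sc k (br (al z) (sc k (br x y)))
        = sc k (sc k (br (al x) (br y z) + br (al y) (br z x) + br (al z) (br x y)))"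
      by (simp only: br_simps scale_right_distrib)
    then show ?thesis by (simp add: hom_lie_algebra_jacobi[OF assms])
  qed
  have bilinear: "bilinear_map sc sc sc (\<lambda>u v. sc k (br u v))"
    unfolding bilinear_map_def
    using Vector_Spaces.linear_compose[OF bilinear_map_linear_left[OF hom_lie_algebra_bilinear[OF assms]]
        linear_scale_self]
      Vector_Spaces.linear_compose[OF bilinear_map_linear_right[OF hom_lie_algebra_bilinear[OF assms]]
        linear_scale_self]
    by (simp add: o_def)
  have twist: "al (sc k (br x y)) = sc k (br (al x) (al y))" for x y
    by (simp add: linear_map_scale[OF hom_lie_algebra_linear_twist[OF assms]]
        hom_lie_algebra_twist_bracket[OF assms])
  have skew: "sc k (br x y) = - sc k (br y x)" for x y
    by (subst hom_lie_algebra_skew[OF assms]) (rule scale_minus_right)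
  show ?thesis
    by (rule hom_lie_algebraI[OF vector_space_axioms bilinear hom_lie_algebra_linear_twist[OF assms]
          skew twist jacobi])
qed

lemma hom_post_lie_subadjacent_hom_lie:
  assumes "hom_post_lie_algebra sc br st al"
  shows "hom_lie_algebra sc (\<lambda>u v. st u v - st v u + br u v) al"
proof -
  note lie = hom_post_lie_hom_lie[OF assms]
  interpret vector_space sc by (rule hom_lie_algebra_vector_space[OF lie])
  interpret vector_space_pair sc sc by unfold_locales
  note st_simps = bilinear_map_simps[OF hom_post_lie_bilinear[OF assms]]
  note br_simps = bilinear_map_simps[OF hom_lie_algebra_bilinear[OF lie]]
  note al_simps = linear_map_add[OF hom_lie_algebra_linear_twist[OF lie]]
    linear_map_diff[OF hom_lie_algebra_linear_twist[OF lie]]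
  define B where "B u v = st u v - st v u + br u v" for u v
  have bilinear: "bilinear_map sc sc sc B"
    unfolding bilinear_map_def B_def
    by (intro allI conjI linear_compose_add linear_compose_sub
        bilinear_map_linear_left[OF hom_post_lie_bilinear[OF assms]]
        bilinear_map_linear_right[OF hom_post_lie_bilinear[OF assms]]
        bilinear_map_linear_left[OF hom_lie_algebra_bilinear[OF lie]]
        bilinear_map_linear_right[OF hom_lie_algebra_bilinear[OF lie]])
  have skew: "B u v = - B v u" for u v
    using hom_lie_algebra_skew[OF lie, of u v] by (simp add: B_def)
  have twist: "al (B u v) = B (al u) (al v)" for u v
    by (simp add: B_def al_simps hom_post_lie_twist[OF assms] hom_lie_algebra_twist_bracket[OF lie])
  have expand: "B (al x) (B y z) =
      st (al x) (st y z) - st (al x) (st z y) - st (al y) (st z x) + st (al z) (st y x)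
      + br (al x) (st y z) - br (al x) (st z y) - br (al z) (st x y) + br (al y) (st x z)
      + br (al x) (br y z)" for x y z
  proof -
    have st_B: "st (al x) (B y z) = st (al x) (st y z) - st (al x) (st z y)
        + br (st x y) (al z) + br (al y) (st x z)"
      by (simp add: B_def st_simps hom_post_lie_derivation[OF assms])
    have "B y z = br y z + st y z - st z y"
      by (simp add: B_def)
    then have B_st: "st (B y z) (al x) = st (al y) (st z x) - st (al z) (st y x)"
      by (simp only: hom_post_lie_assoc[OF assms])
    have br_B: "br (al x) (B y z) = br (al x) (st y z) - br (al x) (st z y) + br (al x) (br y z)"
      by (simp add: B_def br_simps)
    have "B (al x) (B y z) = st (al x) (B y z) - st (B y z) (al x) + br (al x) (B y z)"
      by (rule B_def)
    also have "\<dots> = st (al x) (st y z) - st (al x) (st z y) + br (st x y) (al z) + br (al y) (st x z)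
        - (st (al y) (st z x) - st (al z) (st y x))
        + (br (al x) (st y z) - br (al x) (st z y) + br (al x) (br y z))"
      by (simp only: st_B B_st br_B)
    finally show ?thesis
      by (simp add: hom_lie_algebra_skew[OF lie, of "st x y" "al z"] algebra_simps)
  qed
  have jacobi: "B (al x) (B y z) + B (al y) (B z x) + B (al z) (B x y) = 0" for x y z
    using hom_lie_algebra_jacobi[OF lie, of x y z] by (simp add: expand algebra_simps)
  show ?thesis
    using hom_lie_algebraI[OF vector_space_axioms bilinear hom_lie_algebra_linear_twist[OF lie]
        skew twist jacobi]
    by (simp add: B_def[abs_def])
qed

lemma hom_lie_action_comp_hom:
  assumes hom: "hom_lie_hom s' br' al' sg brg alg \<phi>"
    and act: "hom_lie_action sg brg alg sh brh alh \<rho>"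
  shows "hom_lie_action s' br' al' sh brh alh (\<lambda>x v. \<rho> (\<phi> x) v)"
proof -
  note \<rho>_bilinear = hom_lie_rep_bilinear[OF hom_lie_action_rep[OF act]]
  have "Vector_Spaces.linear s' sg \<phi>"
    using hom unfolding hom_lie_hom_def by blast
  then have "Vector_Spaces.linear s' sh (\<lambda>x. \<rho> (\<phi> x) v)" for v
    using Vector_Spaces.linear_compose[OF _ bilinear_map_linear_left[OF \<rho>_bilinear]]
    by (simp add: o_def)
  then show ?thesis
    using hom act unfolding hom_lie_hom_def hom_lie_action_def hom_lie_rep_def by simp
qed

lemma weighted_O_operator_hom_lie_hom:
  assumes "weighted_O_operator \<kappa> sg brg alg sh brh alh \<rho> A"
  shows "hom_lie_hom sh (\<lambda>u v. \<rho> (A u) v - \<rho> (A v) u + sh \<kappa> (brh u v)) alh sg brg alg A"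
  using assms unfolding weighted_O_operator_def hom_lie_hom_def by simp

lemma weighted_O_operator_hom_post_lie:
  assumes lie: "hom_lie_algebra sh brh alh"
    and act: "hom_lie_action sg brg alg sh brh alh \<rho>"
    and O: "weighted_O_operator \<kappa> sg brg alg sh brh alh \<rho> A"
  shows "hom_post_lie_algebra sh (\<lambda>u v. sh \<kappa> (brh u v)) (\<lambda>u v. \<rho> (A u) v) alh"
proof -
  interpret vector_space sh by (rule hom_lie_algebra_vector_space[OF lie])
  note rep = hom_lie_action_rep[OF act]
  note \<rho>_bilinear = hom_lie_rep_bilinear[OF rep]
  note A_twist = weighted_O_operator_twist[OF O]
  have bilinear: "bilinear_map sh sh sh (\<lambda>u v. \<rho> (A u) v)"
    unfolding bilinear_map_def
    using Vector_Spaces.linear_compose[OF weighted_O_operator_linear[OF O]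
        bilinear_map_linear_left[OF \<rho>_bilinear]]
      bilinear_map_linear_right[OF \<rho>_bilinear]
    by (simp add: o_def)
  have twist: "alh (\<rho> (A u) v) = \<rho> (A (alh u)) (alh v)" for u v
    by (simp add: A_twist hom_lie_rep_twist[OF rep])
  \<comment> \<open>Together with the two bracket-annihilation lemmas, this makes both sides of the
    derivation axioms of the post-Lie product vanish.\<close>
  have star_bracket: "\<rho> (A (alh u)) (sh \<kappa> (brh v w)) = 0" for u v w
    by (simp add: A_twist bilinear_map_simps[OF \<rho>_bilinear] hom_lie_action_on_bracket[OF lie act])
  have assoc: "\<rho> (A (sh \<kappa> (brh u v) + \<rho> (A u) v - \<rho> (A v) u)) (alh w)
      = \<rho> (A (alh u)) (\<rho> (A v) w) - \<rho> (A (alh v)) (\<rho> (A u) w)" for u v w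
  proof -
    have "A (sh \<kappa> (brh u v) + \<rho> (A u) v - \<rho> (A v) u) = brg (A u) (A v)"
      by (subst weighted_O_operator_bracket[OF O]) (simp add: algebra_simps)
    then show ?thesis
      by (simp add: hom_lie_rep_bracket[OF rep] A_twist)
  qed
  show ?thesis
    unfolding hom_post_lie_algebra_def
    using hom_lie_algebra_scale[OF lie] bilinear twist star_bracket assoc
    by (simp add: hom_lie_action_bracket_left[OF act] hom_lie_action_bracket_right[OF lie act])
qed

theorem mainTheorem11:
  fixes \<kappa> :: "'k::field_char_0"
    and sg :: "'k \<Rightarrow> 'g::ab_group_add \<Rightarrow> 'g" and brg :: "'g \<Rightarrow> 'g \<Rightarrow> 'g" and alg :: "'g \<Rightarrow> 'g"
    and sh :: "'k \<Rightarrow> 'h::ab_group_add \<Rightarrow> 'h" and brh :: "'h \<Rightarrow> 'h \<Rightarrow> 'h" and alh :: "'h \<Rightarrow> 'h"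
    and \<rho> :: "'g \<Rightarrow> 'h \<Rightarrow> 'h" and A :: "'h \<Rightarrow> 'g"
  assumes "hom_lie_algebra sg brg alg"
    and "hom_lie_algebra sh brh alh"
    and "hom_lie_action sg brg alg sh brh alh \<rho>"
    and "weighted_O_operator \<kappa> sg brg alg sh brh alh \<rho> A"
  shows "hom_post_lie_algebra sh (\<lambda>u v. sh \<kappa> (brh u v)) (\<lambda>u v. \<rho> (A u) v)  alh \<and>
         hom_lie_algebra sh (\<lambda>u v. \<rho> (A u) v - \<rho> (A v) u + sh \<kappa> (brh u v)) alh \<and>
         hom_lie_hom sh (\<lambda>u v. \<rho> (A u) v - \<rho> (A v) u + sh \<kappa> (brh u v)) alh sg brg alg A \<and>
         hom_lie_action sh (\<lambda>u v. \<rho> (A u) v - \<rho> (A v) u + sh \<kappa> (brh u v)) alh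
           sh brh alh (\<lambda>u v. \<rho> (A u) v)"
proof -
  have post_lie: "hom_post_lie_algebra sh (\<lambda>u v. sh \<kappa> (brh u v)) (\<lambda>u v. \<rho> (A u) v) alh"
    using assms(2-4) by (rule weighted_O_operator_hom_post_lie)
  have hom: "hom_lie_hom sh (\<lambda>u v. \<rho> (A u) v - \<rho> (A v) u + sh \<kappa> (brh u v)) alh sg brg alg A"
    using assms(4) by (rule weighted_O_operator_hom_lie_hom)
  show ?thesis
    using post_lie hom_post_lie_subadjacent_hom_lie[OF post_lie] hom
      hom_lie_action_comp_hom[OF hom assms(3)]
    by simp
qed

end
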